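(* Let $q\geq 2$ and let $G$ be a thin headless spider of order $q$ or a thick headless spider of order $q$. Then $\eta(G)=\lceil (q+1)/2\rceil$.
   Context: All graphs are finite, simple and undirected. A thin headless spider of order $q$ has vertices $u_1,\dots,u_q,v_1,\dots,v_q$, where $\{u_1,\dots,u_q\}$ is a clique, $\{v_1,\dots,v_q\}$ is a stable set, and the edges between the two sets are exactly $(u_i,v_i)$ for $i\in[q]$. A thick headless spider of order $q$ has the same vertices, clique and stable set, but the edges between the two sets are exactly $(u_i,v_j)$ for $i,j\in[q]$, $i\neq j$. For a vertex $v$, $N(v)$ is its set of neighbours. For a positive integer $k$, $[k]=\{1,\dots,k\}$. For a labeling $f:V(G)\to[k]$ and $S\subseteq V(G)$, $f(S)=\sum_{u\in S}f(u)$. A labeling $f:V(G)\to[k]$ is an additive $k$-coloring if $f(N(u))\neq f(N(v))$ for every edge $(u,v)$ of $G$. The additive chromatic number $\eta(G)$ is the least $k$ for which $G$ has an additive $k$-coloring. *)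

theory Defs
  imports Complex_Main
begin

definition simple_graph :: "'a set \<Rightarrow> ('a \<Rightarrow> 'a \<Rightarrow> bool) \<Rightarrow> bool" where
  "simple_graph V E \<longleftrightarrow> finite V \<and> (\<forall>x y. E x y \<longrightarrow> x \<in> V \<and> y \<in> V)
     \<and> (\<forall>x y. E x y \<longrightarrow> E y x) \<and> (\<forall>x. \<not> E x x)"

definition nbhd :: "'a set \<Rightarrow> ('a \<Rightarrow> 'a \<Rightarrow> bool) \<Rightarrow> 'a \<Rightarrow> 'a set" where
  "nbhd V E x = {y \<in> V. E x y}"

definition additive_coloring :: "'a set \<Rightarrow> ('a \<Rightarrow> 'a \<Rightarrow> bool) \<Rightarrow> nat \<Rightarrow> ('a \<Rightarrow> nat) \<Rightarrow> bool" where
  "additive_coloring V E k f \<longleftrightarrow> (\<forall>x\<in>V. f x \<in> {1..k})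
     \<and> (\<forall>x\<in>V. \<forall>y\<in>V. E x y \<longrightarrow> sum f (nbhd V E x) \<noteq> sum f (nbhd V E y))"

definition additive_chromatic_number :: "'a set \<Rightarrow> ('a \<Rightarrow> 'a \<Rightarrow> bool) \<Rightarrow> nat" where
  "additive_chromatic_number V E = (LEAST k. k > 0 \<and> (\<exists>f. additive_coloring V E k f))"

definition thin_headless_spider :: "'a set \<Rightarrow> ('a \<Rightarrow> 'a \<Rightarrow> bool) \<Rightarrow> nat \<Rightarrow> bool" where
  "thin_headless_spider V E q \<longleftrightarrow> (\<exists>u v :: nat \<Rightarrow> 'a.
     inj_on u {1..q} \<and> inj_on v {1..q} \<and> u ` {1..q} \<inter> v ` {1..q} = {}
     \<and> V = u ` {1..q} \<union> v ` {1..q}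
     \<and> (\<forall>i\<in>{1..q}. \<forall>j\<in>{1..q}. E (u i) (u j) \<longleftrightarrow> i \<noteq> j)
     \<and> (\<forall>i\<in>{1..q}. \<forall>j\<in>{1..q}. \<not> E (v i) (v j))
     \<and> (\<forall>i\<in>{1..q}. \<forall>j\<in>{1..q}. (E (u i) (v j) \<longleftrightarrow> i = j) \<and> (E (v j) (u i) \<longleftrightarrow> i = j)))"

definition thick_headless_spider :: "'a set \<Rightarrow> ('a \<Rightarrow> 'a \<Rightarrow> bool) \<Rightarrow> nat \<Rightarrow> bool" where
  "thick_headless_spider V E q \<longleftrightarrow> (\<exists>u v :: nat \<Rightarrow> 'a.
     inj_on u {1..q} \<and> inj_on v {1..q} \<and> u ` {1..q} \<inter> v ` {1..q} = {}
     \<and> V = u ` {1..q} \<union> v ` {1..q}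
     \<and> (\<forall>i\<in>{1..q}. \<forall>j\<in>{1..q}. E (u i) (u j) \<longleftrightarrow> i \<noteq> j)
     \<and> (\<forall>i\<in>{1..q}. \<forall>j\<in>{1..q}. \<not> E (v i) (v j))
     \<and> (\<forall>i\<in>{1..q}. \<forall>j\<in>{1..q}. (E (u i) (v j) \<longleftrightarrow> i \<noteq> j) \<and> (E (v j) (u i) \<longleftrightarrow> i \<noteq> j)))"

end

theory Submission
  imports Defs
begin

text \<open>Write U, S for the label sums of the clique u and of the stable set v. In the thin spider the
  neighbourhood sum of u_i is U - f(u_i) + f(v_i), in the thick one U + S - (f(u_i) + f(v_i)). As the
  u_i are pairwise adjacent, an additive k-colouring makes the q numbers f(v_i) - f(u_i), respectively
  f(u_i) + f(v_i), pairwise distinct; these lie in a range of 2k - 1 integers, so q < 2k. Conversely,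
  for k = ceil((q+1)/2) one chooses labels in [k] making these numbers i - k, respectively i + 2k - q,
  while keeping U (thin) resp. S (thick) at least 2k, which separates the legs u_i v_j as well.\<close>

lemma sum_image_remove:
  assumes "inj_on w I" and "finite I" and "i \<in> I"
  shows "sum f (w ` (I - {i})) + f (w i) = sum (f \<circ> w) I"
proof -
  have "sum f (w ` (I - {i})) = sum (f \<circ> w) (I - {i})"
    using assms(1) by (intro sum.reindex) (meson Diff_subset inj_on_subset)
  then show ?thesis
    using sum.remove[OF assms(2,3), of "f \<circ> w"] by (simp add: add.commute)
qed

lemma additive_chromatic_number_eqI:
  assumes "0 < k" and "additive_coloring V E k f"
    and "\<And>m g. additive_coloring V E m g \<Longrightarrow> k \<le> m"
  shows "additive_chromatic_number V E = k"
  unfolding additive_chromatic_number_def by (rule Least_equality) (use assms in auto)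

lemma ceiling_succ_half: "\<lceil>(real q + 1) / 2\<rceil> = int ((q + 2) div 2)"
proof (rule ceiling_unique)
  have "q + 1 \<le> 2 * ((q + 2) div 2)" and "2 * ((q + 2) div 2) \<le> q + 2" by auto
  then have "real q + 1 \<le> 2 * real ((q + 2) div 2)" and "2 * real ((q + 2) div 2) \<le> real q + 2"
    by (simp_all only: of_nat_le_iff [symmetric] of_nat_simps)
  then show "real_of_int (int ((q + 2) div 2)) - 1 < (real q + 1) / 2"
    and "(real q + 1) / 2 \<le> real_of_int (int ((q + 2) div 2))" by simp_all
qed

locale headless_spider =
  fixes V :: "'a set" and E :: "'a \<Rightarrow> 'a \<Rightarrow> bool" and q :: nat and u v :: "nat \<Rightarrow> 'a"
  assumes inj_u: "inj_on u {1..q}" and inj_v: "inj_on v {1..q}"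
    and disjoint: "u ` {1..q} \<inter> v ` {1..q} = {}"
    and V_eq: "V = u ` {1..q} \<union> v ` {1..q}"
    and clique: "\<forall>i\<in>{1..q}. \<forall>j\<in>{1..q}. E (u i) (u j) \<longleftrightarrow> i \<noteq> j"
    and stable: "\<forall>i\<in>{1..q}. \<forall>j\<in>{1..q}. \<not> E (v i) (v j)"
begin

lemma ball_V_iff: "(\<forall>x\<in>V. P x) \<longleftrightarrow> (\<forall>i\<in>{1..q}. P (u i) \<and> P (v i))"
  using V_eq by blast

lemma labeling_exists: "\<exists>f. \<forall>i\<in>{1..q}. f (u i) = a i \<and> f (v i) = b i"
proof
  let ?f = "\<lambda>x. if x \<in> u ` {1..q} then a (inv_into {1..q} u x) else b (inv_into {1..q} v x)"
  show "\<forall>i\<in>{1..q}. ?f (u i) = a i \<and> ?f (v i) = b i"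
  proof
    fix i assume i: "i \<in> {1..q}"
    then have "v i \<notin> u ` {1..q}" using disjoint by blast
    with i show "?f (u i) = a i \<and> ?f (v i) = b i"
      using inv_into_f_f[OF inj_u i] inv_into_f_f[OF inj_v i] by simp
  qed
qed

lemma ball_edges_iff:
  "(\<forall>x\<in>V. \<forall>y\<in>V. E x y \<longrightarrow> P x y) \<longleftrightarrow>
     (\<forall>i\<in>{1..q}. \<forall>j\<in>{1..q}. (i \<noteq> j \<longrightarrow> P (u i) (u j)) \<and>
        (E (u i) (v j) \<longrightarrow> P (u i) (v j)) \<and> (E (v i) (u j) \<longrightarrow> P (v i) (u j)))"
  using clique stable unfolding ball_V_iff by blast

end

locale thin_spider = headless_spider +
  assumes thin_legs: "\<forall>i\<in>{1..q}. \<forall>j\<in>{1..q}. (E (u i) (v j) \<longleftrightarrow> i = j) \<and> (E (v j) (u i) \<longleftrightarrow> i = j)"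
begin

lemma nbhd_u: "i \<in> {1..q} \<Longrightarrow> nbhd V E (u i) = insert (v i) (u ` ({1..q} - {i}))"
  using clique thin_legs inj_u unfolding nbhd_def V_eq by (auto simp: inj_on_eq_iff)

lemma nbhd_v: "i \<in> {1..q} \<Longrightarrow> nbhd V E (v i) = {u i}"
  using stable thin_legs unfolding nbhd_def V_eq by auto

lemma E_u_v_iff: "i \<in> {1..q} \<Longrightarrow> j \<in> {1..q} \<Longrightarrow> E (u i) (v j) \<longleftrightarrow> i = j"
  and E_v_u_iff: "i \<in> {1..q} \<Longrightarrow> j \<in> {1..q} \<Longrightarrow> E (v j) (u i) \<longleftrightarrow> i = j"
  using thin_legs by blast+

lemma sum_nbhd_u:
  fixes f :: "'a \<Rightarrow> nat"
  assumes "i \<in> {1..q}"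
  shows "sum f (nbhd V E (u i)) + f (u i) = sum (f \<circ> u) {1..q} + f (v i)"
proof -
  have "v i \<notin> u ` ({1..q} - {i})" using disjoint assms by blast
  then have "sum f (nbhd V E (u i)) = f (v i) + sum f (u ` ({1..q} - {i}))"
    by (simp add: nbhd_u[OF assms])
  with sum_image_remove[OF inj_u _ assms, of f] show ?thesis by (simp add: add.commute)
qed

lemma sum_nbhd_v: "i \<in> {1..q} \<Longrightarrow> sum f (nbhd V E (v i)) = f (u i)"
  by (simp add: nbhd_v)

lemma separates_edges_iff:
  "(\<forall>x\<in>V. \<forall>y\<in>V. E x y \<longrightarrow> s x \<noteq> s y) \<longleftrightarrow>
     (\<forall>i\<in>{1..q}. \<forall>j\<in>{1..q}. i \<noteq> j \<longrightarrow> s (u i) \<noteq> s (u j)) \<and>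
     (\<forall>i\<in>{1..q}. s (u i) \<noteq> s (v i))"
  unfolding ball_edges_iff using E_u_v_iff E_v_u_iff by auto

lemma additive_coloring_iff:
  fixes f :: "'a \<Rightarrow> nat"
  shows "additive_coloring V E k f \<longleftrightarrow>
     (\<forall>i\<in>{1..q}. f (u i) \<in> {1..k} \<and> f (v i) \<in> {1..k}) \<and>
     inj_on (\<lambda>i. int (f (v i)) - int (f (u i))) {1..q} \<and>
     (\<forall>i\<in>{1..q}. sum (f \<circ> u) {1..q} + f (v i) \<noteq> 2 * f (u i))"
proof -
  let ?s = "\<lambda>x. sum f (nbhd V E x)"
  have clique_edge: "?s (u i) = ?s (u j) \<longleftrightarrow> int (f (v i)) - int (f (u i)) = int (f (v j)) - int (f (u j))"
    if "i \<in> {1..q}" and "j \<in> {1..q}" for i j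
    using sum_nbhd_u[OF that(1), of f] sum_nbhd_u[OF that(2), of f] by (intro iffI) linarith+
  have leg_edge: "?s (u i) = ?s (v i) \<longleftrightarrow> sum (f \<circ> u) {1..q} + f (v i) = 2 * f (u i)"
    if "i \<in> {1..q}" for i
    using sum_nbhd_u[OF that, of f] sum_nbhd_v[OF that, of f] by (intro iffI) linarith+
  have clique_edges: "(\<forall>i\<in>{1..q}. \<forall>j\<in>{1..q}. i \<noteq> j \<longrightarrow> ?s (u i) \<noteq> ?s (u j)) \<longleftrightarrow>
      inj_on (\<lambda>i. int (f (v i)) - int (f (u i))) {1..q}"
    unfolding inj_on_def using clique_edge by blast
  have leg_edges: "(\<forall>i\<in>{1..q}. ?s (u i) \<noteq> ?s (v i)) \<longleftrightarrow>
      (\<forall>i\<in>{1..q}. sum (f \<circ> u) {1..q} + f (v i) \<noteq> 2 * f (u i))"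
    using leg_edge by blast
  show ?thesis
    unfolding additive_coloring_def separates_edges_iff clique_edges leg_edges
    unfolding ball_V_iff ..
qed

lemma additive_coloring_lower_bound:
  assumes "additive_coloring V E k f" and "0 < q"
  shows "q < 2 * k"
proof -
  let ?h = "\<lambda>i. int (f (v i)) - int (f (u i))"
  have labels: "\<forall>i\<in>{1..q}. f (u i) \<in> {1..k} \<and> f (v i) \<in> {1..k}"
    and inj: "inj_on ?h {1..q}"
    using assms(1) by (simp_all add: additive_coloring_iff)
  have "?h ` {1..q} \<subseteq> {1 - int k..int k - 1}"
    using labels by force
  from card_inj_on_le[OF inj this] assms(2) show ?thesis by simp
qed

lemma additive_coloring_exists:
  assumes "2 \<le> q"
  shows "\<exists>f. additive_coloring V E ((q + 2) div 2) f"
proof -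
  define k where "k = (q + 2) div 2"
  have k: "2 \<le> k" "q < 2 * k" using assms by (auto simp: k_def)
  obtain f where f: "\<forall>i\<in>{1..q}. f (u i) = min k (2 * k - i) \<and> f (v i) = min k i"
    using labeling_exists[of "\<lambda>i. min k (2 * k - i)" "\<lambda>i. min k i"] by blast
  have labels: "\<forall>i\<in>{1..q}. f (u i) \<in> {1..k} \<and> f (v i) \<in> {1..k}"
    using f k by auto
  have "int (f (v i)) - int (f (u i)) = int i - int k" if "i \<in> {1..q}" for i
    using f that k by (cases "i \<le> k") auto
  then have "inj_on (\<lambda>i. int (f (v i)) - int (f (u i))) {1..q}"
    by (auto simp: inj_on_def)
  moreover have "2 * k \<le> sum (f \<circ> u) {1..q}"
  proof -
    have "sum (f \<circ> u) {1, 2} \<le> sum (f \<circ> u) {1..q}"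
      using assms by (intro sum_mono2) auto
    moreover have "sum (f \<circ> u) {1, 2} = 2 * k"
      using f k assms by auto
    ultimately show ?thesis by simp
  qed
  moreover have "sum (f \<circ> u) {1..q} + f (v i) \<noteq> 2 * f (u i)" if "i \<in> {1..q}" for i
  proof -
    have "f (u i) \<le> k" and "1 \<le> f (v i)" using labels that by auto
    with \<open>2 * k \<le> sum (f \<circ> u) {1..q}\<close> show ?thesis by linarith
  qed
  ultimately have "additive_coloring V E k f"
    using labels by (simp add: additive_coloring_iff)
  then show ?thesis unfolding k_def by blast
qed

lemma additive_chromatic_number_eq:
  assumes "2 \<le> q"
  shows "additive_chromatic_number V E = (q + 2) div 2"
proof -
  obtain f where "additive_coloring V E ((q + 2) div 2) f"
    using additive_coloring_exists[OF assms] by blast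
  moreover have "(q + 2) div 2 \<le> m" if "additive_coloring V E m g" for m g
    using additive_coloring_lower_bound[OF that] assms by simp
  ultimately show ?thesis
    by (intro additive_chromatic_number_eqI) auto
qed

end

locale thick_spider = headless_spider +
  assumes thick_legs: "\<forall>i\<in>{1..q}. \<forall>j\<in>{1..q}. (E (u i) (v j) \<longleftrightarrow> i \<noteq> j) \<and> (E (v j) (u i) \<longleftrightarrow> i \<noteq> j)"
begin

lemma nbhd_u: "i \<in> {1..q} \<Longrightarrow> nbhd V E (u i) = u ` ({1..q} - {i}) \<union> v ` ({1..q} - {i})"
  using clique thick_legs inj_u inj_v unfolding nbhd_def V_eq by (auto simp: inj_on_eq_iff)

lemma nbhd_v: "i \<in> {1..q} \<Longrightarrow> nbhd V E (v i) = u ` ({1..q} - {i})"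
  using stable thick_legs inj_u unfolding nbhd_def V_eq by (auto simp: inj_on_eq_iff)

lemma E_u_v_iff: "i \<in> {1..q} \<Longrightarrow> j \<in> {1..q} \<Longrightarrow> E (u i) (v j) \<longleftrightarrow> i \<noteq> j"
  and E_v_u_iff: "i \<in> {1..q} \<Longrightarrow> j \<in> {1..q} \<Longrightarrow> E (v j) (u i) \<longleftrightarrow> i \<noteq> j"
  using thick_legs by blast+

lemma sum_nbhd_u:
  fixes f :: "'a \<Rightarrow> nat"
  assumes "i \<in> {1..q}"
  shows "sum f (nbhd V E (u i)) + (f (u i) + f (v i)) = sum (f \<circ> u) {1..q} + sum (f \<circ> v) {1..q}"
proof -
  have "u ` ({1..q} - {i}) \<inter> v ` ({1..q} - {i}) = {}" using disjoint by blast
  then have "sum f (nbhd V E (u i)) = sum f (u ` ({1..q} - {i})) + sum f (v ` ({1..q} - {i}))"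
    by (simp add: nbhd_u[OF assms] sum.union_disjoint)
  with sum_image_remove[OF inj_u _ assms, of f] sum_image_remove[OF inj_v _ assms, of f]
  show ?thesis by simp
qed

lemma sum_nbhd_v:
  fixes f :: "'a \<Rightarrow> nat"
  assumes "i \<in> {1..q}"
  shows "sum f (nbhd V E (v i)) + f (u i) = sum (f \<circ> u) {1..q}"
  using sum_image_remove[OF inj_u _ assms, of f] by (simp add: nbhd_v[OF assms])

lemma separates_edges_iff:
  "(\<forall>x\<in>V. \<forall>y\<in>V. E x y \<longrightarrow> s x \<noteq> s y) \<longleftrightarrow>
     (\<forall>i\<in>{1..q}. \<forall>j\<in>{1..q}. i \<noteq> j \<longrightarrow> s (u i) \<noteq> s (u j)) \<and>
     (\<forall>i\<in>{1..q}. \<forall>j\<in>{1..q}. i \<noteq> j \<longrightarrow> s (u i) \<noteq> s (v j))"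
proof -
  have "(\<forall>i\<in>{1..q}. \<forall>j\<in>{1..q}. i \<noteq> j \<longrightarrow> s (v i) \<noteq> s (u j)) \<longleftrightarrow>
      (\<forall>i\<in>{1..q}. \<forall>j\<in>{1..q}. i \<noteq> j \<longrightarrow> s (u i) \<noteq> s (v j))"
    by metis
  then show ?thesis
    unfolding ball_edges_iff using E_u_v_iff E_v_u_iff by auto
qed

lemma additive_coloring_iff:
  fixes f :: "'a \<Rightarrow> nat"
  shows "additive_coloring V E k f \<longleftrightarrow>
     (\<forall>i\<in>{1..q}. f (u i) \<in> {1..k} \<and> f (v i) \<in> {1..k}) \<and>
     inj_on (\<lambda>i. f (u i) + f (v i)) {1..q} \<and>
     (\<forall>i\<in>{1..q}. \<forall>j\<in>{1..q}. i \<noteq> j \<longrightarrow> sum (f \<circ> v) {1..q} + f (u j) \<noteq> f (u i) + f (v i))"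
proof -
  let ?s = "\<lambda>x. sum f (nbhd V E x)"
  have clique_edge: "?s (u i) = ?s (u j) \<longleftrightarrow> f (u i) + f (v i) = f (u j) + f (v j)"
    if "i \<in> {1..q}" and "j \<in> {1..q}" for i j
    using sum_nbhd_u[OF that(1), of f] sum_nbhd_u[OF that(2), of f] by (intro iffI) linarith+
  have leg_edge: "?s (u i) = ?s (v j) \<longleftrightarrow> sum (f \<circ> v) {1..q} + f (u j) = f (u i) + f (v i)"
    if "i \<in> {1..q}" and "j \<in> {1..q}" for i j
    using sum_nbhd_u[OF that(1), of f] sum_nbhd_v[OF that(2), of f] by (intro iffI) linarith+
  have clique_edges: "(\<forall>i\<in>{1..q}. \<forall>j\<in>{1..q}. i \<noteq> j \<longrightarrow> ?s (u i) \<noteq> ?s (u j)) \<longleftrightarrow>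
      inj_on (\<lambda>i. f (u i) + f (v i)) {1..q}"
    unfolding inj_on_def using clique_edge by blast
  have leg_edges: "(\<forall>i\<in>{1..q}. \<forall>j\<in>{1..q}. i \<noteq> j \<longrightarrow> ?s (u i) \<noteq> ?s (v j)) \<longleftrightarrow>
      (\<forall>i\<in>{1..q}. \<forall>j\<in>{1..q}. i \<noteq> j \<longrightarrow> sum (f \<circ> v) {1..q} + f (u j) \<noteq> f (u i) + f (v i))"
    using leg_edge by blast
  show ?thesis
    unfolding additive_coloring_def separates_edges_iff clique_edges leg_edges
    unfolding ball_V_iff ..
qed

lemma additive_coloring_lower_bound:
  assumes "additive_coloring V E k f" and "0 < q"
  shows "q < 2 * k"
proof -
  have labels: "\<forall>i\<in>{1..q}. f (u i) \<in> {1..k} \<and> f (v i) \<in> {1..k}"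
    and inj: "inj_on (\<lambda>i. f (u i) + f (v i)) {1..q}"
    using assms(1) by (simp_all add: additive_coloring_iff)
  have "(\<lambda>i. f (u i) + f (v i)) ` {1..q} \<subseteq> {2..2 * k}"
    using labels by force
  from card_inj_on_le[OF inj this] assms(2) show ?thesis by simp
qed

lemma additive_coloring_exists:
  assumes "2 \<le> q"
  shows "\<exists>f. additive_coloring V E ((q + 2) div 2) f"
proof -
  define k where "k = (q + 2) div 2"
  have k: "2 \<le> k" "q < 2 * k" using assms by (auto simp: k_def)
  obtain f where f: "\<forall>i\<in>{1..q}. f (u i) = max 1 (i + k - q) \<and> f (v i) = min k (i + 2 * k - q - 1)"
    using labeling_exists[of "\<lambda>i. max 1 (i + k - q)" "\<lambda>i. min k (i + 2 * k - q - 1)"] by blast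
  have labels: "\<forall>i\<in>{1..q}. f (u i) \<in> {1..k} \<and> f (v i) \<in> {1..k}"
    using f k by auto
  have sum_pair: "f (u i) + f (v i) = i + 2 * k - q" if "i \<in> {1..q}" for i
    using f that k by (cases "q - k < i") auto
  then have "inj_on (\<lambda>i. f (u i) + f (v i)) {1..q}"
    using k by (auto simp: inj_on_def)
  moreover have "2 * k \<le> sum (f \<circ> v) {1..q}"
  proof -
    have "sum (f \<circ> v) {q - 1, q} \<le> sum (f \<circ> v) {1..q}"
      using assms by (intro sum_mono2) auto
    moreover have "sum (f \<circ> v) {q - 1, q} = 2 * k"
      using f k assms by auto
    ultimately show ?thesis by simp
  qed
  moreover have "sum (f \<circ> v) {1..q} + f (u j) \<noteq> f (u i) + f (v i)"
    if "i \<in> {1..q}" and "j \<in> {1..q}" for i j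
  proof -
    have "f (u i) \<le> k" and "f (v i) \<le> k" and "1 \<le> f (u j)" using labels that by auto
    with \<open>2 * k \<le> sum (f \<circ> v) {1..q}\<close> show ?thesis by linarith
  qed
  ultimately have "additive_coloring V E k f"
    using labels by (simp add: additive_coloring_iff)
  then show ?thesis unfolding k_def by blast
qed

lemma additive_chromatic_number_eq:
  assumes "2 \<le> q"
  shows "additive_chromatic_number V E = (q + 2) div 2"
proof -
  obtain f where "additive_coloring V E ((q + 2) div 2) f"
    using additive_coloring_exists[OF assms] by blast
  moreover have "(q + 2) div 2 \<le> m" if "additive_coloring V E m g" for m g
    using additive_coloring_lower_bound[OF that] assms by simp
  ultimately show ?thesis
    by (intro additive_chromatic_number_eqI) auto
qed

end

theorem mainTheorem12:
  fixes V :: "'a set" and E :: "'a \<Rightarrow> 'a \<Rightarrow> bool" and q :: nat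
  assumes "q \<ge> 2"
    and "simple_graph V E"
    and "thin_headless_spider V E q \<or> thick_headless_spider V E q"
  shows "int (additive_chromatic_number V E) = \<lceil>(real q + 1) / 2\<rceil>"
  \<comment> \<open>The spider structure fixes every adjacency in V.\<close>
proof -
  have "additive_chromatic_number V E = (q + 2) div 2"
    using assms(3)
  proof
    assume "thin_headless_spider V E q"
    then obtain u v where "thin_spider V E q u v"
      unfolding thin_headless_spider_def thin_spider_def thin_spider_axioms_def headless_spider_def
      by blast
    then show ?thesis using assms(1) by (rule thin_spider.additive_chromatic_number_eq)
  next
    assume "thick_headless_spider V E q"
    then obtain u v where "thick_spider V E q u v"
      unfolding thick_headless_spider_def thick_spider_def thick_spider_axioms_def headless_spider_def
      by blast
    then show ?thesis using assms(1) by (rule thick_spider.additive_chromatic_number_eq)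
  qed
  then show ?thesis by (simp add: ceiling_succ_half)
qed

end
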